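(* There is a polynomial $p$ such that the following holds for all $N\geq1$, all $\delta\in(0,1]$ and all $\varepsilon>0$. Let $V$ be a finite nonempty subset of $\mathbb{R}^N$ such that for every $v\in V$ the closed Euclidean ball $B(v,1)$ contains at least $\delta|V|$ points of $V$. Then there is a set $X\subseteq V$ with $|X|\leq p(1/\delta,1/\varepsilon)$ such that $V\subseteq\bigcup_{x\in X}B(x,1+\varepsilon)$.
   Context: $B(v,r)$ denotes the closed Euclidean ball of radius $r$ centered at $v$. The polynomial $p$ does not depend on $N$ or $V$. *)

theory Defs
  imports Complex_Main
begin

definition is_poly2 :: "(real \<Rightarrow> real \<Rightarrow> real) \<Rightarrow> bool" where
  "is_poly2 p \<longleftrightarrow> (\<exists>(d::nat) (c::nat \<Rightarrow> nat \<Rightarrow> real).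
     \<forall>a b. p a b = (\<Sum>i\<le>d. \<Sum>j\<le>d. c i j * a ^ i * b ^ j))"

text \<open>R^N, represented as real sequences vanishing at indices \<ge> N.\<close>
definition RN :: "nat \<Rightarrow> (nat \<Rightarrow> real) set" where
  "RN N = {v. \<forall>i\<ge>N. v i = 0}"

definition distN :: "nat \<Rightarrow> (nat \<Rightarrow> real) \<Rightarrow> (nat \<Rightarrow> real) \<Rightarrow> real" where
  "distN N v w = sqrt (\<Sum>i<N. (v i - w i)^2)"

definition cballN :: "nat \<Rightarrow> (nat \<Rightarrow> real) \<Rightarrow> real \<Rightarrow> (nat \<Rightarrow> real) set" where
  "cballN N v r = {w \<in> RN N. distN N v w \<le> r}"

end

theory Submission
  imports Defs "HOL-Analysis.Convex" "HOL-Analysis.L2_Norm" "HOL-Library.FuncSet"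
begin

text \<open>Double sampling with sample compression.  Fix a sample length \<open>t\<close> polynomial in \<open>1/\<delta>\<close>
  and \<open>1/\<epsilon>\<close> and suppose no sample \<open>xs \<in> V^t\<close> covers \<open>V\<close> by the balls \<open>B(xs i, 1 + \<epsilon>)\<close>.  Then
  for at least half of all pairs of samples the first one misses some \<open>B(v, 1 + \<epsilon>)\<close> while, by
  density, the second one hits \<open>B(v, 1)\<close> many times.  Lifting \<open>R^N\<close> onto a paraboloid turns
  these two balls into halfspaces with margin \<open>\<epsilon>\<close>, so the perceptron separates the two samples
  after \<open>M = O(1/\<epsilon>^2)\<close> mistakes, and the resulting classifier is encoded by \<open>M + 1\<close> sample
  positions.  For a fixed code, swapping the two samples at random at the remaining positions shows
  that it separates at most a \<open>2^-q\<close> fraction of the pairs; as there are far fewer than \<open>2^q\<close>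
  codes, this is a contradiction.\<close>

lemma sum_choose_power_atMost:
  fixes a :: real
  assumes "n \<le> d"
  shows "(\<Sum>k\<le>d. real (n choose k) * a ^ k) = (a + 1) ^ n"
proof -
  have "(\<Sum>k\<le>d. real (n choose k) * a ^ k) = (\<Sum>k\<le>n. real (n choose k) * a ^ k)"
    by (rule sum.mono_neutral_right) (use assms in auto)
  also have "\<dots> = (a + 1) ^ n" using binomial_ring[of a 1 n] by simp
  finally show ?thesis .
qed

lemma is_poly2_shifted_powers: "is_poly2 (\<lambda>a b. C * (a + 1) ^ m * (b + 1) ^ n)"
  unfolding is_poly2_def
proof (intro exI allI)
  fix a b :: real
  define d where "d = max m n"
  have "C * (a + 1) ^ m * (b + 1) ^ n
      = C * ((\<Sum>i\<le>d. real (m choose i) * a ^ i) * (\<Sum>j\<le>d. real (n choose j) * b ^ j))"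
    by (simp add: d_def sum_choose_power_atMost)
  also have "\<dots> = C * (\<Sum>i\<le>d. \<Sum>j\<le>d. real (m choose i) * a ^ i * (real (n choose j) * b ^ j))"
    by (simp only: sum_product)
  also have "\<dots> = (\<Sum>i\<le>d. \<Sum>j\<le>d. (C * real (m choose i) * real (n choose j)) * a ^ i * b ^ j)"
    unfolding sum_distrib_left by (intro sum.cong refl) (simp add: mult_ac)
  finally show "C * (a + 1) ^ m * (b + 1) ^ n =
      (\<Sum>i\<le>d. \<Sum>j\<le>d. (\<lambda>i j. C * real (m choose i) * real (n choose j)) i j * a ^ i * b ^ j)"
    by simp
qed

section \<open>The perceptron\<close>

definition inner_on :: "nat set \<Rightarrow> (nat \<Rightarrow> real) \<Rightarrow> (nat \<Rightarrow> real) \<Rightarrow> real" where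
  "inner_on A x y = (\<Sum>j\<in>A. x j * y j)"

definition signed_sum :: "('e \<Rightarrow> nat \<Rightarrow> real) \<Rightarrow> ('e \<Rightarrow> bool) \<Rightarrow> 'e list \<Rightarrow> nat \<Rightarrow> real" where
  "signed_sum \<phi> lab L = (\<lambda>j. \<Sum>e\<leftarrow>L. (if lab e then 1 else -1) * \<phi> e j)"

lemma signed_sum_Cons:
  "signed_sum \<phi> lab (e # L) = (\<lambda>j. (if lab e then 1 else -1) * \<phi> e j + signed_sum \<phi> lab L j)"
  by (simp add: signed_sum_def)

lemma inner_on_self_nonneg: "0 \<le> inner_on A x x"
  unfolding inner_on_def by (simp add: sum_nonneg)

lemma inner_on_Cauchy_Schwarz: "(inner_on A x y)\<^sup>2 \<le> inner_on A x x * inner_on A y y"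
  unfolding inner_on_def using Cauchy_Schwarz_ineq_sum[of x y A] by (simp add: power2_eq_square)

lemma inner_on_add_left: "inner_on A (\<lambda>j. s * x j + y j) z = s * inner_on A x z + inner_on A y z"
  unfolding inner_on_def by (simp add: algebra_simps sum.distrib sum_distrib_left)

lemma inner_on_add_self:
  "inner_on A (\<lambda>j. s * x j + y j) (\<lambda>j. s * x j + y j)
     = s\<^sup>2 * inner_on A x x + 2 * s * inner_on A y x + inner_on A y y"
  unfolding inner_on_def by (simp add: algebra_simps sum.distrib sum_distrib_left power2_eq_square)

lemma perceptron_length_bound:
  assumes "\<gamma> > 0" "k > 0"
    and "real k * \<gamma> \<le> inner_on A W w" "inner_on A W W \<le> real k * R2" "inner_on A w w \<le> B"
  shows "real k \<le> R2 * B / \<gamma>\<^sup>2"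
proof -
  have "(real k * \<gamma>)\<^sup>2 \<le> (inner_on A W w)\<^sup>2"
    using assms by (intro power_mono) auto
  also have "\<dots> \<le> inner_on A W W * inner_on A w w" by (rule inner_on_Cauchy_Schwarz)
  also have "\<dots> \<le> (real k * R2) * B"
    using assms inner_on_self_nonneg[of A w] inner_on_self_nonneg[of A W]
    by (meson mult_mono order_trans)
  finally have "real k * (real k * \<gamma>\<^sup>2) \<le> real k * (R2 * B)"
    by (simp add: power2_eq_square algebra_simps)
  hence "real k * \<gamma>\<^sup>2 \<le> R2 * B" using assms(2) by (simp add: mult_le_cancel_left)
  thus ?thesis using assms(1) by (simp add: field_simps)
qed

lemma perceptron_mistake_step:
  assumes "s\<^sup>2 = 1" and mistake: "s * inner_on A W x \<le> 0"
    and margin: "\<gamma> \<le> s * inner_on A x w" and norm: "inner_on A x x \<le> R2"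
    and "real k * \<gamma> \<le> inner_on A W w" "inner_on A W W \<le> real k * R2"
  shows "real (Suc k) * \<gamma> \<le> inner_on A (\<lambda>j. s * x j + W j) w"
    and "inner_on A (\<lambda>j. s * x j + W j) (\<lambda>j. s * x j + W j) \<le> real (Suc k) * R2"
proof -
  show "real (Suc k) * \<gamma> \<le> inner_on A (\<lambda>j. s * x j + W j) w"
    using assms unfolding inner_on_add_left by (simp add: algebra_simps)
  show "inner_on A (\<lambda>j. s * x j + W j) (\<lambda>j. s * x j + W j) \<le> real (Suc k) * R2"
    using assms unfolding inner_on_add_self by (simp add: algebra_simps)
qed

text \<open>Each mistake of the perceptron raises the correlation with the separating vector \<open>w\<close>
  by at least the margin \<open>\<gamma>\<close>, while the squared norm grows by at most \<open>R2\<close>.\<close>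
lemma perceptron_run:
  fixes E :: "'e set" and \<phi> :: "'e \<Rightarrow> nat \<Rightarrow> real"
  assumes norm: "\<forall>e\<in>E. inner_on A (\<phi> e) (\<phi> e) \<le> R2"
    and margin: "\<forall>e\<in>E. (if lab e then 1 else -1) * inner_on A (\<phi> e) w \<ge> \<gamma>"
    and mistakes: "\<And>L. set L \<subseteq> E \<Longrightarrow> length L < k \<Longrightarrow>
      \<exists>e\<in>E. (if lab e then 1 else -1) * inner_on A (signed_sum \<phi> lab L) (\<phi> e) \<le> 0"
  shows "\<exists>L. set L \<subseteq> E \<and> length L = k \<and> real k * \<gamma> \<le> inner_on A (signed_sum \<phi> lab L) w
      \<and> inner_on A (signed_sum \<phi> lab L) (signed_sum \<phi> lab L) \<le> real k * R2"
  using mistakes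
proof (induction k)
  case 0
  show ?case by (intro exI[of _ "[]"]) (simp add: inner_on_def signed_sum_def)
next
  case (Suc k)
  then obtain L where L: "set L \<subseteq> E" "length L = k"
    "real k * \<gamma> \<le> inner_on A (signed_sum \<phi> lab L) w"
    "inner_on A (signed_sum \<phi> lab L) (signed_sum \<phi> lab L) \<le> real k * R2"
    by auto
  obtain e where e: "e \<in> E"
    and mistake: "(if lab e then 1 else -1) * inner_on A (signed_sum \<phi> lab L) (\<phi> e) \<le> 0"
    using Suc.prems[OF L(1)] L(2) by auto
  define s :: real where "s = (if lab e then 1 else -1)"
  have "s\<^sup>2 = 1" by (simp add: s_def)
  moreover have "\<gamma> \<le> s * inner_on A (\<phi> e) w" using margin e by (simp add: s_def)
  moreover have "inner_on A (\<phi> e) (\<phi> e) \<le> R2" using norm e by auto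
  moreover have "signed_sum \<phi> lab (e # L) = (\<lambda>j. s * \<phi> e j + signed_sum \<phi> lab L j)"
    by (simp add: signed_sum_Cons s_def)
  ultimately show ?case
    using e L mistake perceptron_mistake_step[of s A "signed_sum \<phi> lab L" "\<phi> e" \<gamma> w R2 k]
    by (intro exI[of _ "e # L"]) (simp add: s_def)
qed

lemma perceptron_convergence:
  fixes E :: "'e set" and \<phi> :: "'e \<Rightarrow> nat \<Rightarrow> real"
  assumes "\<gamma> > 0" "R2 \<ge> 0"
    and norm: "\<forall>e\<in>E. inner_on A (\<phi> e) (\<phi> e) \<le> R2"
    and margin: "\<forall>e\<in>E. (if lab e then 1 else -1) * inner_on A (\<phi> e) w \<ge> \<gamma>"
    and "inner_on A w w \<le> B"
  shows "\<exists>L. set L \<subseteq> E \<and> real (length L) \<le> R2 * B / \<gamma>\<^sup>2 \<and>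
     (\<forall>e\<in>E. if lab e then inner_on A (signed_sum \<phi> lab L) (\<phi> e) > 0
                     else inner_on A (signed_sum \<phi> lab L) (\<phi> e) \<le> 0)"
proof (rule ccontr)
  define X where "X = R2 * B / \<gamma>\<^sup>2"
  define k where "k = nat \<lfloor>X\<rfloor> + 1"
  have "X \<ge> 0"
    unfolding X_def using assms inner_on_self_nonneg[of A w] by (auto intro!: divide_nonneg_pos)
  hence k: "X < real k" "k > 0" unfolding k_def by linarith+
  assume no_short: "\<not> ?thesis"
  have "\<exists>e\<in>E. (if lab e then 1 else -1) * inner_on A (signed_sum \<phi> lab L) (\<phi> e) \<le> 0"
    if "set L \<subseteq> E" "length L < k" for L
  proof -
    have "real (length L) \<le> real (nat \<lfloor>X\<rfloor>)" using that(2) by (simp add: k_def)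
    also have "\<dots> \<le> X" using \<open>X \<ge> 0\<close> by simp
    finally have "\<not> (\<forall>e\<in>E. if lab e then inner_on A (signed_sum \<phi> lab L) (\<phi> e) > 0
                    else inner_on A (signed_sum \<phi> lab L) (\<phi> e) \<le> 0)"
      using no_short that(1) unfolding X_def by blast
    then obtain e where "e \<in> E" "\<not> (if lab e then inner_on A (signed_sum \<phi> lab L) (\<phi> e) > 0
                    else inner_on A (signed_sum \<phi> lab L) (\<phi> e) \<le> 0)"
      by blast
    then show ?thesis by (intro bexI[of _ e]) (auto split: if_splits)
  qed
  then obtain L where "real k * \<gamma> \<le> inner_on A (signed_sum \<phi> lab L) w"
    "inner_on A (signed_sum \<phi> lab L) (signed_sum \<phi> lab L) \<le> real k * R2"
    using perceptron_run[OF norm margin] by blast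
  with perceptron_length_bound[OF \<open>\<gamma> > 0\<close> \<open>k > 0\<close>] \<open>inner_on A w w \<le> B\<close> have "real k \<le> X"
    unfolding X_def by blast
  with k show False by simp
qed

section \<open>Swapping two samples\<close>

definition swap_on :: "nat set \<Rightarrow> (nat \<Rightarrow> 'a) \<times> (nat \<Rightarrow> 'a) \<Rightarrow> (nat \<Rightarrow> 'a) \<times> (nat \<Rightarrow> 'a)" where
  "swap_on s c = ((\<lambda>i. if i \<in> s then snd c i else fst c i), (\<lambda>i. if i \<in> s then fst c i else snd c i))"

lemma swap_on_swap_on [simp]: "swap_on s (swap_on s c) = c"
  by (simp add: swap_on_def prod_eq_iff fun_eq_iff)

lemma swap_on_in_PiE_Times:
  assumes "c \<in> (PiE {..<t} (\<lambda>_. V)) \<times> (PiE {..<t} (\<lambda>_. V))" "s \<subseteq> {..<t}"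
  shows "swap_on s c \<in> (PiE {..<t} (\<lambda>_. V)) \<times> (PiE {..<t} (\<lambda>_. V))"
  using assms by (auto simp: swap_on_def PiE_def extensional_def Pi_def)

definition separated_pairs ::
    "((nat \<Rightarrow> 'a) \<times> (nat \<Rightarrow> 'a) \<Rightarrow> 'a \<Rightarrow> bool) \<Rightarrow> nat set \<Rightarrow> nat \<Rightarrow> nat
       \<Rightarrow> ((nat \<Rightarrow> 'a) \<times> (nat \<Rightarrow> 'a)) set" where
  "separated_pairs H I t q = {c. (\<forall>i<t. \<not> H c (fst c i)) \<and> q \<le> card {i. i < t \<and> i \<notin> I \<and> H c (snd c i)}}"

lemma card_Pow_agreeing_on:
  assumes "finite U" "A \<subseteq> U" "s0 \<subseteq> U"
  shows "card {s \<in> Pow U. s \<inter> A = s0 \<inter> A} = 2 ^ card (U - A)"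
proof -
  have "bij_betw (\<lambda>s. s - A) {s \<in> Pow U. s \<inter> A = s0 \<inter> A} (Pow (U - A))"
    by (rule bij_betw_byWitness[where f'="\<lambda>s. s \<union> (s0 \<inter> A)"]) (use assms in blast)+
  thus ?thesis using assms(1) by (simp add: bij_betw_same_card card_Pow)
qed

text \<open>On a position where \<open>H c\<close> accepts exactly one of the two points, a swap landing in
  \<open>separated_pairs\<close> is forced to put the accepted point into the second sample, so the swaps
  landing there agree on the at least \<open>q\<close> such positions.\<close>
lemma card_swaps_into_separated_pairs:
  fixes H :: "(nat \<Rightarrow> 'a) \<times> (nat \<Rightarrow> 'a) \<Rightarrow> 'a \<Rightarrow> bool"
  assumes inv: "\<And>s c. s \<inter> I = {} \<Longrightarrow> H (swap_on s c) = H c"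
  shows "card {s \<in> Pow ({..<t} - I). swap_on s c \<in> separated_pairs H I t q} * 2 ^ q
           \<le> 2 ^ card ({..<t} - I)"
proof (cases "{s \<in> Pow ({..<t} - I). swap_on s c \<in> separated_pairs H I t q} = {}")
  case True
  then show ?thesis by (simp only: True card.empty)
next
  case False
  define U where "U = {..<t} - I"
  define P where "P = separated_pairs H I t q"
  have inv_U: "H (swap_on s c) = H c" if "s \<subseteq> U" for s c
    using that by (intro inv) (auto simp: U_def)
  from False obtain s0 where s0: "s0 \<subseteq> U" "swap_on s0 c \<in> P" by (auto simp: U_def P_def)
  have fU: "finite U" by (simp add: U_def)
  define A where "A = {i\<in>U. H c (fst c i) \<noteq> H c (snd c i)}"
  have AU: "A \<subseteq> U" by (auto simp: A_def)
  have forced: "i \<in> s \<longleftrightarrow> H c (fst c i)" if "s \<subseteq> U" "swap_on s c \<in> P" "i \<in> A" for s i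
  proof -
    have "i < t" using that(3) by (auto simp: A_def U_def)
    hence "\<not> H (swap_on s c) (fst (swap_on s c) i)" using that(2) by (auto simp: P_def separated_pairs_def)
    hence "\<not> H c (if i \<in> s then snd c i else fst c i)" using inv_U[OF that(1)] by (simp add: swap_on_def)
    thus ?thesis using that(3) by (auto simp: A_def split: if_splits)
  qed
  have "{s \<in> Pow U. swap_on s c \<in> P} \<subseteq> {s \<in> Pow U. s \<inter> A = s0 \<inter> A}"
  proof safe
    fix s i assume "s \<subseteq> U" "swap_on s c \<in> P" "i \<in> s" "i \<in> A"
    thus "i \<in> s0" using forced[of s i] forced[OF s0 \<open>i \<in> A\<close>] by auto
  next
    fix s i assume "s \<subseteq> U" "swap_on s c \<in> P" "i \<in> s0" "i \<in> A"
    thus "i \<in> s" using forced[of s i] forced[OF s0 \<open>i \<in> A\<close>] by auto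
  qed
  hence swaps: "card {s \<in> Pow U. swap_on s c \<in> P} \<le> 2 ^ card (U - A)"
    using card_mono[of "{s \<in> Pow U. s \<inter> A = s0 \<inter> A}"] card_Pow_agreeing_on[OF fU AU s0(1)] fU
    by simp
  have "q \<le> card A"
  proof -
    define K where "K = {i. i < t \<and> i \<notin> I \<and> H (swap_on s0 c) (snd (swap_on s0 c) i)}"
    have "q \<le> card K" using s0(2) by (simp add: K_def P_def separated_pairs_def)
    moreover have "K \<subseteq> A"
    proof
      fix i assume "i \<in> K"
      hence i: "i < t" "i \<notin> I" "H c (if i \<in> s0 then fst c i else snd c i)"
        using inv_U[OF s0(1)] by (auto simp: K_def swap_on_def)
      have "\<not> H c (if i \<in> s0 then snd c i else fst c i)"
        using s0(2) i(1) inv_U[OF s0(1)] by (auto simp: P_def separated_pairs_def swap_on_def)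
      with i show "i \<in> A" by (auto simp: A_def U_def split: if_splits)
    qed
    ultimately show ?thesis using card_mono[OF finite_subset[OF AU fU]] by (meson order_trans)
  qed
  have "card (U - A) + card A = card U"
    using AU fU by (simp add: card_Diff_subset card_mono finite_subset)
  have "card {s \<in> Pow U. swap_on s c \<in> P} * 2 ^ q \<le> 2 ^ card (U - A) * 2 ^ card A"
    using swaps \<open>q \<le> card A\<close> by (intro mult_le_mono power_increasing) simp_all
  also have "\<dots> = 2 ^ card U" by (simp only: power_add[symmetric] \<open>card (U - A) + card A = card U\<close>)
  finally show ?thesis by (simp add: U_def P_def)
qed

text \<open>Double counting over all swaps: a random swap of a pair of samples is again uniformly
  distributed, and it lands in \<open>separated_pairs\<close> with probability at most \<open>2^-q\<close>.\<close>
lemma card_separated_pairs_le: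
  fixes H :: "(nat \<Rightarrow> 'a) \<times> (nat \<Rightarrow> 'a) \<Rightarrow> 'a \<Rightarrow> bool"
  assumes inv: "\<And>s c. s \<inter> I = {} \<Longrightarrow> H (swap_on s c) = H c"
    and C: "C = (PiE {..<t} (\<lambda>_. V)) \<times> (PiE {..<t} (\<lambda>_. V))" and "finite V"
  shows "card (C \<inter> separated_pairs H I t q) * 2 ^ q \<le> card C"
proof -
  define U where "U = {..<t} - I"
  define P where "P = C \<inter> separated_pairs H I t q"
  have fC: "finite C" using C \<open>finite V\<close> by (simp add: finite_PiE)
  have fU: "finite U" by (simp add: U_def)
  have swap_invariant: "card P = card {c \<in> C. swap_on s c \<in> P}" if "s \<in> Pow U" for s
  proof -
    have "s \<subseteq> {..<t}" using that by (auto simp: U_def)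
    hence "swap_on s c \<in> C" if "c \<in> P" for c
      using that swap_on_in_PiE_Times[of c t V s] by (simp add: P_def C)
    hence "swap_on s ` P \<subseteq> {c \<in> C. swap_on s c \<in> P}" by auto
    hence "bij_betw (swap_on s) {c \<in> C. swap_on s c \<in> P} P"
      by (intro bij_betw_byWitness[where f'="swap_on s"]) auto
    thus ?thesis by (simp add: bij_betw_same_card)
  qed
  have "2 ^ card U * card P = (\<Sum>s\<in>Pow U. card P)" by (simp add: card_Pow fU)
  also have "\<dots> = (\<Sum>s\<in>Pow U. card {c \<in> C. swap_on s c \<in> P})"
    using swap_invariant by (rule sum.cong[OF refl])
  also have "\<dots> = (\<Sum>s\<in>Pow U. \<Sum>c\<in>C. of_bool (swap_on s c \<in> P))"
    using fC by (simp add: Int_def)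
  also have "\<dots> = (\<Sum>c\<in>C. card {s \<in> Pow U. swap_on s c \<in> P})"
    using fU by (subst sum.swap) (simp add: Int_def)
  finally have "2 ^ card U * card P * 2 ^ q = (\<Sum>c\<in>C. card {s \<in> Pow U. swap_on s c \<in> P} * 2 ^ q)"
    by (simp add: sum_distrib_right)
  also have "\<dots> \<le> (\<Sum>c\<in>C. 2 ^ card U)"
  proof (rule sum_mono)
    fix c
    have "card {s \<in> Pow U. swap_on s c \<in> P} \<le> card {s \<in> Pow U. swap_on s c \<in> separated_pairs H I t q}"
      using fU by (intro card_mono) (auto simp: P_def)
    thus "card {s \<in> Pow U. swap_on s c \<in> P} * 2 ^ q \<le> 2 ^ card U"
      using card_swaps_into_separated_pairs[where t=t and c=c and q=q, OF inv] unfolding U_def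
      by (meson mult_le_mono1 order_trans)
  qed
  finally show ?thesis by (simp add: P_def mult.assoc)
qed

section \<open>Samples hitting a dense set\<close>

lemma one_minus_power_mult_le_one:
  fixes \<delta> :: real
  assumes "0 \<le> \<delta>" "\<delta> \<le> 1"
  shows "(1 - \<delta>) ^ b * (1 + real b * \<delta>) \<le> 1"
proof -
  have "(1 - \<delta>) ^ b * (1 + real b * \<delta>) \<le> (1 - \<delta>) ^ b * (1 + \<delta>) ^ b"
    using Bernoulli_inequality[of \<delta> b] assms by (intro mult_left_mono) auto
  also have "\<dots> = (1 - \<delta>\<^sup>2) ^ b" by (simp add: power_mult_distrib[symmetric] power2_eq_square algebra_simps)
  also have "\<dots> \<le> 1" using assms by (intro power_le_one) (auto simp: power2_eq_square mult_le_one)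
  finally show ?thesis .
qed

lemma block_subset_lessThan:
  fixes j q0 b :: nat
  assumes "j < q0"
  shows "{j * b..<j * b + b} \<subseteq> {..<q0 * b}"
proof -
  have "Suc j * b \<le> q0 * b" using assms by (intro mult_le_mono1) simp
  thus ?thesis by auto
qed

lemma miss_block_if_few_hits:
  assumes ys: "ys \<in> PiE {..<q0 * b} (\<lambda>_. V)" and few: "card {i. i < q0 * b \<and> ys i \<in> S} < q0"
  shows "\<exists>j<q0. ys \<in> PiE {..<q0 * b} (\<lambda>i. if i \<in> {j * b..<j * b + b} then V - S else V)"
proof (rule ccontr)
  define blk where "blk j = {j * b..<j * b + b}" for j
  have blk_sub: "blk j \<subseteq> {..<q0 * b}" if "j < q0" for j
    using block_subset_lessThan[OF that] by (simp add: blk_def)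
  assume no_miss: "\<not> ?thesis"
  have "\<exists>i\<in>blk j. ys i \<in> S" if "j < q0" for j
  proof -
    have "ys \<notin> PiE {..<q0 * b} (\<lambda>i. if i \<in> blk j then V - S else V)"
      using no_miss that unfolding blk_def by blast
    then obtain i where "i < q0 * b" "ys i \<notin> (if i \<in> blk j then V - S else V)"
      using ys by (auto simp: PiE_iff)
    moreover have "ys i \<in> V" using ys \<open>i < q0 * b\<close> by auto
    ultimately show ?thesis by (auto split: if_splits)
  qed
  then obtain f where f: "f j \<in> blk j" "ys (f j) \<in> S" if "j < q0" for j
    by metis
  have block_index: "i div b = j" if "i \<in> blk j" for i j
    using that by (intro div_nat_eqI) (auto simp: blk_def mult.commute)
  have "inj_on f {..<q0}"
  proof (rule inj_onI)
    fix j j' assume "j \<in> {..<q0}" "j' \<in> {..<q0}" "f j = f j'"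
    with f(1)[of j] f(1)[of j'] have "f j \<in> blk j" "f j \<in> blk j'" by auto
    thus "j = j'" using block_index by metis
  qed
  moreover have "f ` {..<q0} \<subseteq> {i. i < q0 * b \<and> ys i \<in> S}" using f blk_sub by auto
  ultimately have "q0 \<le> card {i. i < q0 * b \<and> ys i \<in> S}"
    using card_inj_on_le[of f "{..<q0}"] by simp
  with few show False by simp
qed

lemma card_PiE_avoiding_on:
  assumes "finite S" "S \<subseteq> V" "B \<subseteq> {..<t}"
  shows "card (PiE {..<t} (\<lambda>i. if i \<in> B then V - S else V))
           = (card V - card S) ^ card B * card V ^ (t - card B)"
proof -
  have "card (PiE {..<t} (\<lambda>i. if i \<in> B then V - S else V))
      = (\<Prod>i<t. card (if i \<in> B then V - S else V))"
    by (simp add: card_PiE)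
  also have "\<dots> = (\<Prod>i<t. if i \<in> B then card V - card S else card V)"
    using card_Diff_subset[OF assms(1,2)] by (intro prod.cong) auto
  also have "\<dots> = (card V - card S) ^ card ({..<t} \<inter> B) * card V ^ card ({..<t} - B)"
    by (simp add: prod.If_cases Int_commute Diff_eq)
  also have "\<dots> = (card V - card S) ^ card B * card V ^ (t - card B)"
    using assms(3) finite_subset[OF assms(3)] by (simp add: Int_absorb1 card_Diff_subset)
  finally show ?thesis .
qed

lemma block_miss_union_bound:
  fixes s n :: nat
  assumes "s \<le> n" "real s \<ge> \<delta> * real n" "0 < \<delta>" "\<delta> \<le> 1" and long: "real b * \<delta> \<ge> 2 * real q0"
  shows "real q0 * (real (n - s) ^ b * real n ^ (q0 * b - b)) \<le> real n ^ (q0 * b) / 2"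
proof -
  define t where "t = q0 * b"
  have "real q0 * (real (n - s) ^ b * real n ^ (t - b))
      \<le> real q0 * (((1 - \<delta>) * real n) ^ b * real n ^ (t - b))"
    using assms by (intro mult_left_mono mult_right_mono power_mono) (auto simp: of_nat_diff algebra_simps)
  also have "\<dots> = real q0 * (1 - \<delta>) ^ b * real n ^ t"
  proof (cases "q0 = 0")
    case False
    hence "b \<le> t" by (simp add: t_def)
    thus ?thesis by (simp add: power_mult_distrib power_add[symmetric])
  qed simp
  also have "\<dots> \<le> real n ^ t / 2"
  proof -
    have "2 * real q0 * (1 - \<delta>) ^ b \<le> (1 + real b * \<delta>) * (1 - \<delta>) ^ b"
      using long \<open>\<delta> \<le> 1\<close> by (intro mult_right_mono) auto
    also have "\<dots> \<le> 1" using one_minus_power_mult_le_one[of \<delta> b] assms by (simp add: mult.commute)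
    finally have "2 * real q0 * (1 - \<delta>) ^ b * real n ^ t \<le> 1 * real n ^ t"
      by (intro mult_right_mono) auto
    thus ?thesis by simp
  qed
  finally show ?thesis by (simp add: t_def)
qed

text \<open>Cutting a sample of length \<open>q0 * b\<close> into \<open>q0\<close> blocks of length \<open>b\<close>, each block misses
  a set of density \<open>\<delta>\<close> with probability \<open>(1 - \<delta>)^b \<le> 1 / (2 * q0)\<close>.\<close>
lemma card_tuples_hitting_often:
  fixes V S :: "'a set"
  assumes "finite V" "S \<subseteq> V" and dense: "real (card S) \<ge> \<delta> * real (card V)"
    and "0 < \<delta>" "\<delta> \<le> 1" and long: "real b * \<delta> \<ge> 2 * real q0"
  shows "real (card V ^ (q0 * b))
           \<le> 2 * real (card {ys \<in> PiE {..<q0 * b} (\<lambda>_. V). q0 \<le> card {i. i < q0 * b \<and> ys i \<in> S}})"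
proof -
  define t where "t = q0 * b"
  define Xs where "Xs = PiE {..<t} (\<lambda>_. V)"
  define G where "G = {ys \<in> Xs. q0 \<le> card {i. i < t \<and> ys i \<in> S}}"
  define blk where "blk j = {j * b..<j * b + b}" for j
  define F where "F j = PiE {..<t} (\<lambda>i. if i \<in> blk j then V - S else V)" for j
  define n where "n = card V"
  have fXs: "finite Xs" using \<open>finite V\<close> by (simp add: Xs_def finite_PiE)
  have "S \<subseteq> V" "finite S" using assms finite_subset by auto
  have card_F: "card (F j) = (n - card S) ^ b * n ^ (t - b)" if "j < q0" for j
    using card_PiE_avoiding_on[OF \<open>finite S\<close> \<open>S \<subseteq> V\<close>, of "blk j" t] block_subset_lessThan[OF that]
    by (simp add: F_def blk_def t_def n_def)
  have "Xs - G \<subseteq> (\<Union>j<q0. F j)"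
  proof
    fix ys assume "ys \<in> Xs - G"
    hence "ys \<in> PiE {..<q0 * b} (\<lambda>_. V)" "card {i. i < q0 * b \<and> ys i \<in> S} < q0"
      by (simp_all add: Xs_def G_def t_def not_le)
    from miss_block_if_few_hits[OF this] show "ys \<in> (\<Union>j<q0. F j)"
      by (auto simp: F_def blk_def t_def)
  qed
  hence "card (Xs - G) \<le> card (\<Union>j<q0. F j)"
    by (rule card_mono[rotated]) (simp add: F_def \<open>finite V\<close> finite_PiE)
  also have "\<dots> \<le> (\<Sum>j<q0. card (F j))" by (rule card_UN_le) simp
  also have "\<dots> = q0 * ((n - card S) ^ b * n ^ (t - b))" using card_F by simp
  finally have "real (card (Xs - G)) \<le> real q0 * (real (n - card S) ^ b * real n ^ (t - b))"
    by (metis of_nat_le_iff of_nat_mult of_nat_power)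
  also have "\<dots> \<le> real n ^ t / 2"
    using block_miss_union_bound[OF card_mono[OF \<open>finite V\<close> \<open>S \<subseteq> V\<close>] _ \<open>0 < \<delta>\<close> \<open>\<delta> \<le> 1\<close> long] dense
    by (simp add: n_def t_def)
  finally have "real (card (Xs - G)) \<le> real n ^ t / 2" .
  moreover have "card (Xs - G) = card Xs - card G" "card G \<le> card Xs"
    using fXs by (auto simp: G_def intro: card_Diff_subset card_mono finite_subset)
  moreover have "card Xs = n ^ t" by (simp add: Xs_def n_def card_PiE)
  ultimately have "real n ^ t \<le> 2 * real (card G)" by (simp add: of_nat_diff)
  thus ?thesis by (simp add: G_def Xs_def n_def t_def)
qed

section \<open>Lifting balls to halfspaces\<close>

definition sqdistN :: "nat \<Rightarrow> (nat \<Rightarrow> real) \<Rightarrow> (nat \<Rightarrow> real) \<Rightarrow> real" where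
  "sqdistN N u v = (\<Sum>i<N. (u i - v i)\<^sup>2)"

lemma sqdistN_nonneg: "0 \<le> sqdistN N u v"
  unfolding sqdistN_def by (simp add: sum_nonneg)

lemma sqdistN_commute: "sqdistN N u v = sqdistN N v u"
  unfolding sqdistN_def by (simp add: power2_commute)

lemma distN_sqdistN: "distN N u v = sqrt (sqdistN N u v)"
  by (simp add: distN_def sqdistN_def)

lemma distN_le_iff_sqdistN: "r \<ge> 0 \<Longrightarrow> distN N u v \<le> r \<longleftrightarrow> sqdistN N u v \<le> r\<^sup>2"
  unfolding distN_sqdistN using sqdistN_nonneg[of N u v]
  by (metis real_le_lsqrt real_sqrt_le_iff real_sqrt_pow2 sqrt_le_D)

lemma distN_commute: "distN N u v = distN N v u"
  by (simp add: distN_sqdistN sqdistN_commute)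

lemma distN_triangle: "distN N u w \<le> distN N u v + distN N v w"
proof -
  have "distN N u w = L2_set (\<lambda>i. (u i - v i) + (v i - w i)) {..<N}"
    by (simp add: distN_def L2_set_def)
  also have "\<dots> \<le> L2_set (\<lambda>i. u i - v i) {..<N} + L2_set (\<lambda>i. v i - w i) {..<N}"
    by (rule L2_set_triangle_ineq)
  also have "\<dots> = distN N u v + distN N v w" by (simp add: distN_def L2_set_def)
  finally show ?thesis .
qed

text \<open>Lifting \<open>u \<in> R^N\<close> to \<open>(u - a, |u - a|^2, 1) \<in> R^(N+2)\<close> turns every ball into a halfspace:
  the ball of radius \<open>sqrt r2\<close> around \<open>v\<close> is cut out by the normal vector
  \<open>(2 (v - a), -1, r2 - |v - a|^2)\<close>.  Centering at a sample point \<open>a\<close> keeps the norms of the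
  lifted points bounded.\<close>
definition paraboloid_lift :: "nat \<Rightarrow> (nat \<Rightarrow> real) \<Rightarrow> (nat \<Rightarrow> real) \<Rightarrow> nat \<Rightarrow> real" where
  "paraboloid_lift N a u = (\<lambda>j. if j < N then u j - a j else if j = N then sqdistN N u a else 1)"

definition ball_normal :: "nat \<Rightarrow> (nat \<Rightarrow> real) \<Rightarrow> (nat \<Rightarrow> real) \<Rightarrow> real \<Rightarrow> nat \<Rightarrow> real" where
  "ball_normal N v a r2 = (\<lambda>j. if j < N then 2 * (v j - a j) else if j = N then -1 else r2 - sqdistN N v a)"

lemma inner_on_lessThan_Suc_Suc:
  "inner_on {..<Suc (Suc N)} x y = (\<Sum>j<N. x j * y j) + x N * y N + x (Suc N) * y (Suc N)"
  by (simp add: inner_on_def)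

lemma sqdistN_centered:
  "sqdistN N u v = sqdistN N u a - 2 * (\<Sum>j<N. (u j - a j) * (v j - a j)) + sqdistN N v a"
proof -
  have "sqdistN N u v = (\<Sum>j<N. (u j - a j)\<^sup>2 - 2 * ((u j - a j) * (v j - a j)) + (v j - a j)\<^sup>2)"
    unfolding sqdistN_def by (rule sum.cong) (auto simp: power2_eq_square algebra_simps)
  also have "\<dots> = sqdistN N u a - 2 * (\<Sum>j<N. (u j - a j) * (v j - a j)) + sqdistN N v a"
    by (simp add: sqdistN_def sum.distrib sum_subtractf sum_distrib_left)
  finally show ?thesis .
qed

lemma inner_on_paraboloid_lift_ball_normal:
  "inner_on {..<Suc (Suc N)} (paraboloid_lift N a u) (ball_normal N v a r2) = r2 - sqdistN N u v"
proof -
  have "(\<Sum>j<N. paraboloid_lift N a u j * ball_normal N v a r2 j) = 2 * (\<Sum>j<N. (u j - a j) * (v j - a j))"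
    unfolding sum_distrib_left
    by (rule sum.cong) (auto simp: paraboloid_lift_def ball_normal_def algebra_simps)
  thus ?thesis
    unfolding inner_on_lessThan_Suc_Suc using sqdistN_centered[of N u v a]
    by (simp add: paraboloid_lift_def ball_normal_def)
qed

lemma inner_on_paraboloid_lift_self:
  "inner_on {..<Suc (Suc N)} (paraboloid_lift N a u) (paraboloid_lift N a u)
     = sqdistN N u a + (sqdistN N u a)\<^sup>2 + 1"
proof -
  have "(\<Sum>j<N. paraboloid_lift N a u j * paraboloid_lift N a u j) = sqdistN N u a"
    by (simp add: paraboloid_lift_def sqdistN_def power2_eq_square)
  thus ?thesis unfolding inner_on_lessThan_Suc_Suc by (simp add: paraboloid_lift_def power2_eq_square)
qed

lemma inner_on_ball_normal_self:
  "inner_on {..<Suc (Suc N)} (ball_normal N v a r2) (ball_normal N v a r2)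
     = 4 * sqdistN N v a + 1 + (r2 - sqdistN N v a)\<^sup>2"
proof -
  have "(\<Sum>j<N. ball_normal N v a r2 j * ball_normal N v a r2 j) = 4 * sqdistN N v a"
    unfolding sqdistN_def sum_distrib_left
    by (rule sum.cong) (auto simp: ball_normal_def power2_eq_square algebra_simps)
  thus ?thesis unfolding inner_on_lessThan_Suc_Suc by (simp add: ball_normal_def power2_eq_square)
qed

text \<open>The lifted points have squared norm at most \<open>91\<close>, the normal of the ball of radius
  \<open>1 + \<epsilon>/2\<close> has squared norm at most \<open>11\<close>, and the margin is \<open>\<epsilon>\<close>; hence the bound
  \<open>91 * 11 / \<epsilon>^2\<close> on the number of mistakes.\<close>
lemma perceptron_separates_balls:
  fixes E :: "'e set" and p :: "'e \<Rightarrow> nat \<Rightarrow> real"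
  assumes "0 < \<epsilon>" "\<epsilon> \<le> 1" and anchor: "sqdistN N v a \<le> 1"
    and near: "\<forall>e\<in>E. sqdistN N (p e) a \<le> 9"
    and inside: "\<forall>e\<in>E. lab e \<longrightarrow> distN N v (p e) \<le> 1"
    and outside: "\<forall>e\<in>E. \<not> lab e \<longrightarrow> \<not> distN N (p e) v \<le> 1 + \<epsilon>"
  shows "\<exists>L. set L \<subseteq> E \<and> real (length L) \<le> 1001 / \<epsilon>\<^sup>2 \<and>
     (\<forall>e\<in>E. if lab e
       then inner_on {..<Suc (Suc N)} (signed_sum (\<lambda>e. paraboloid_lift N a (p e)) lab L) (paraboloid_lift N a (p e)) > 0
       else inner_on {..<Suc (Suc N)} (signed_sum (\<lambda>e. paraboloid_lift N a (p e)) lab L) (paraboloid_lift N a (p e)) \<le> 0)"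
proof -
  define A where "A = {..<Suc (Suc N)}"
  define \<phi> where "\<phi> = (\<lambda>e. paraboloid_lift N a (p e))"
  define r2 :: real where "r2 = (1 + \<epsilon>/2)\<^sup>2"
  define w where "w = ball_normal N v a r2"
  have "\<forall>e\<in>E. inner_on A (\<phi> e) (\<phi> e) \<le> 91"
  proof
    fix e assume "e \<in> E"
    hence "sqdistN N (p e) a \<le> 9" "0 \<le> sqdistN N (p e) a" using near sqdistN_nonneg by auto
    moreover from this have "(sqdistN N (p e) a)\<^sup>2 \<le> 9\<^sup>2" by (intro power_mono)
    ultimately show "inner_on A (\<phi> e) (\<phi> e) \<le> 91"
      unfolding \<phi>_def A_def inner_on_paraboloid_lift_self by simp
  qed
  moreover have "\<forall>e\<in>E. (if lab e then 1 else -1) * inner_on A (\<phi> e) w \<ge> \<epsilon>"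
  proof
    fix e assume "e \<in> E"
    show "(if lab e then 1 else -1) * inner_on A (\<phi> e) w \<ge> \<epsilon>"
    proof (cases "lab e")
      case True
      hence "sqdistN N (p e) v \<le> 1"
        using inside \<open>e \<in> E\<close> distN_le_iff_sqdistN[of 1 N v] by (simp add: sqdistN_commute)
      moreover have "r2 - 1 \<ge> \<epsilon>" using assms by (simp add: r2_def power2_eq_square algebra_simps)
      ultimately show ?thesis
        using True unfolding \<phi>_def w_def A_def inner_on_paraboloid_lift_ball_normal by simp
    next
      case False
      hence "\<not> sqdistN N (p e) v \<le> (1 + \<epsilon>)\<^sup>2"
        using outside \<open>e \<in> E\<close> distN_le_iff_sqdistN[of "1 + \<epsilon>" N "p e" v] assms by simp
      moreover have "(1 + \<epsilon>)\<^sup>2 - r2 \<ge> \<epsilon>" using assms by (simp add: r2_def power2_eq_square algebra_simps)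
      ultimately show ?thesis
        using False unfolding \<phi>_def w_def A_def inner_on_paraboloid_lift_ball_normal by simp
    qed
  qed
  moreover have "inner_on A w w \<le> 11"
  proof -
    have "\<epsilon> * \<epsilon> \<le> 1" using assms mult_le_one[of \<epsilon> \<epsilon>] by simp
    hence "1 \<le> r2" "r2 \<le> 9/4" using assms by (auto simp: r2_def power2_eq_square algebra_simps)
    hence "(r2 - sqdistN N v a)\<^sup>2 \<le> (9/4)\<^sup>2"
      using anchor sqdistN_nonneg[of N v a] by (intro power_mono) auto
    thus ?thesis unfolding w_def A_def inner_on_ball_normal_self using anchor by (simp add: power2_eq_square)
  qed
  ultimately show ?thesis
    using perceptron_convergence[of \<epsilon> 91 E A \<phi> lab w 11] assms unfolding A_def \<phi>_def by simp
qed

section \<open>Sample compression\<close>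

text \<open>A code compresses a classifier into an anchor position and a list of labelled positions of a
  pair of samples \<open>c\<close>: the position \<open>(i, False)\<close> stands for the point \<open>fst c i\<close> and
  \<open>(i, True)\<close> for \<open>snd c i\<close>.  The decoded classifier depends on \<open>c\<close> only at these positions.\<close>
definition pick :: "(nat \<Rightarrow> 'a) \<times> (nat \<Rightarrow> 'a) \<Rightarrow> nat \<times> bool \<Rightarrow> 'a" where
  "pick c e = (if snd e then snd c (fst e) else fst c (fst e))"

definition codes :: "nat \<Rightarrow> nat \<Rightarrow> ((nat \<times> bool) \<times> (nat \<times> bool) list) set" where
  "codes t M = ({..<t} \<times> UNIV) \<times> {L. set L \<subseteq> {..<t} \<times> UNIV \<and> length L \<le> M}"

definition code_positions :: "(nat \<times> bool) \<times> (nat \<times> bool) list \<Rightarrow> nat set" where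
  "code_positions \<kappa> = insert (fst (fst \<kappa>)) (fst ` set (snd \<kappa>))"

text \<open>Points farther than \<open>3\<close> from the anchor are rejected outright, so that the perceptron only
  deals with lifted points of bounded norm.\<close>
definition code_classifier ::
    "nat \<Rightarrow> (nat \<Rightarrow> (nat \<Rightarrow> real)) \<times> (nat \<Rightarrow> (nat \<Rightarrow> real)) \<Rightarrow> (nat \<times> bool) \<times> (nat \<times> bool) list
       \<Rightarrow> (nat \<Rightarrow> real) \<Rightarrow> bool" where
  "code_classifier N c \<kappa> u \<longleftrightarrow> sqdistN N u (pick c (fst \<kappa>)) \<le> 9 \<and>
     inner_on {..<Suc (Suc N)}
       (signed_sum (\<lambda>e. paraboloid_lift N (pick c (fst \<kappa>)) (pick c e)) snd (snd \<kappa>))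
       (paraboloid_lift N (pick c (fst \<kappa>)) u) > 0"

lemma pick_swap_on: "fst e \<notin> s \<Longrightarrow> pick (swap_on s c) e = pick c e"
  by (simp add: pick_def swap_on_def)

lemma code_classifier_swap_on:
  assumes "s \<inter> code_positions \<kappa> = {}"
  shows "code_classifier N (swap_on s c) \<kappa> = code_classifier N c \<kappa>"
proof -
  have same: "pick (swap_on s c) e = pick c e" if "e = fst \<kappa> \<or> e \<in> set (snd \<kappa>)" for e
    using assms that by (intro pick_swap_on) (auto simp: code_positions_def)
  have anchor: "pick (swap_on s c) (fst \<kappa>) = pick c (fst \<kappa>)" using same by simp
  have list: "signed_sum (\<lambda>e. g (pick (swap_on s c) e)) lab (snd \<kappa>) = signed_sum (\<lambda>e. g (pick c e)) lab (snd \<kappa>)"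
    for g :: "(nat \<Rightarrow> real) \<Rightarrow> nat \<Rightarrow> real" and lab
    unfolding signed_sum_def using same by (intro ext arg_cong[where f=sum_list] map_cong) auto
  show ?thesis unfolding code_classifier_def by (simp only: anchor list)
qed

lemma card_code_positions: "card (code_positions \<kappa>) \<le> Suc (length (snd \<kappa>))"
proof -
  have "card (code_positions \<kappa>) \<le> Suc (card (fst ` set (snd \<kappa>)))"
    unfolding code_positions_def by (rule card_insert_le_m1) auto
  also have "card (fst ` set (snd \<kappa>)) \<le> length (snd \<kappa>)"
    using card_image_le[of "set (snd \<kappa>)" fst] card_length[of "snd \<kappa>"] by simp
  finally show ?thesis by simp
qed

lemma finite_codes: "finite (codes t M)"
  unfolding codes_def by (intro finite_cartesian_product finite_lists_length_le) auto

lemma card_codes: "card (codes t M) \<le> 2 * t * ((M + 1) * (2 * t) ^ M)"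
proof (cases "t = 0")
  case False
  have card_positions: "card ({..<t} \<times> (UNIV :: bool set)) = 2 * t"
    by (simp add: card_cartesian_product)
  have "card {L. set L \<subseteq> {..<t} \<times> (UNIV :: bool set) \<and> length L \<le> M} = (\<Sum>i\<le>M. (2 * t) ^ i)"
    using card_lists_length_le[of "{..<t} \<times> (UNIV :: bool set)" M] card_positions by simp
  also have "\<dots> \<le> (\<Sum>i\<le>M. (2 * t) ^ M)"
    using False by (intro sum_mono power_increasing) auto
  finally show ?thesis using card_positions by (simp add: codes_def card_cartesian_product)
qed (simp add: codes_def)

text \<open>The anchor is a hit of the second sample and the list is the perceptron's sequence of
  mistakes; at most \<open>M + 1\<close> of the \<open>q + M + 1\<close> hits are used up as code positions.\<close>
lemma separating_code_exists:
  fixes c :: "(nat \<Rightarrow> (nat \<Rightarrow> real)) \<times> (nat \<Rightarrow> (nat \<Rightarrow> real))"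
  assumes "0 < \<epsilon>" "\<epsilon> \<le> 1" and M: "M = nat \<lfloor>1001 / \<epsilon>\<^sup>2\<rfloor>"
    and far: "\<forall>i<t. \<not> distN N (fst c i) v \<le> 1 + \<epsilon>"
    and many: "q + M + 1 \<le> card {i. i < t \<and> distN N v (snd c i) \<le> 1}"
  shows "\<exists>\<kappa>\<in>codes t M. c \<in> separated_pairs (\<lambda>c. code_classifier N c \<kappa>) (code_positions \<kappa>) t q"
proof -
  define Pos where "Pos = {i. i < t \<and> distN N v (snd c i) \<le> 1}"
  have "card Pos > 0" using many by (simp add: Pos_def)
  hence "Pos \<noteq> {}" by auto
  then obtain i0 where i0: "i0 \<in> Pos" by auto
  define a where "a = snd c i0"
  have anchor: "sqdistN N v a \<le> 1" using i0 distN_le_iff_sqdistN[of 1 N v a] by (simp add: Pos_def a_def)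
  have pos_near: "sqdistN N (snd c i) a \<le> 4" if "i \<in> Pos" for i
  proof -
    have "distN N (snd c i) a \<le> distN N (snd c i) v + distN N v a" by (rule distN_triangle)
    also have "\<dots> \<le> 2" using that i0 by (simp add: Pos_def a_def distN_commute)
    finally show ?thesis using distN_le_iff_sqdistN[of 2] by simp
  qed
  define E where "E = {(i, False) | i. i < t \<and> sqdistN N (fst c i) a \<le> 9} \<union> {(i, True) | i. i \<in> Pos}"
  have "\<forall>e\<in>E. sqdistN N (pick c e) a \<le> 9"
    by (auto simp: E_def pick_def dest!: pos_near)
  moreover have "\<forall>e\<in>E. snd e \<longrightarrow> distN N v (pick c e) \<le> 1"
    and "\<forall>e\<in>E. \<not> snd e \<longrightarrow> \<not> distN N (pick c e) v \<le> 1 + \<epsilon>"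
    using far by (auto simp: E_def Pos_def pick_def)
  ultimately obtain L where L: "set L \<subseteq> E" "real (length L) \<le> 1001 / \<epsilon>\<^sup>2" and separates:
    "\<forall>e\<in>E. if snd e
       then inner_on {..<Suc (Suc N)} (signed_sum (\<lambda>e. paraboloid_lift N a (pick c e)) snd L) (paraboloid_lift N a (pick c e)) > 0
       else inner_on {..<Suc (Suc N)} (signed_sum (\<lambda>e. paraboloid_lift N a (pick c e)) snd L) (paraboloid_lift N a (pick c e)) \<le> 0"
    using perceptron_separates_balls[OF \<open>0 < \<epsilon>\<close> \<open>\<epsilon> \<le> 1\<close> anchor, of E "pick c" snd] by blast
  define \<kappa> where "\<kappa> = ((i0, True), L)"
  have classifier: "code_classifier N c \<kappa> u \<longleftrightarrow> sqdistN N u a \<le> 9 \<and>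
      inner_on {..<Suc (Suc N)} (signed_sum (\<lambda>e. paraboloid_lift N a (pick c e)) snd L) (paraboloid_lift N a u) > 0"
    for u
    by (simp add: code_classifier_def \<kappa>_def pick_def a_def)
  have "length L \<le> M" using L(2) by (simp add: M le_nat_floor)
  hence "\<kappa> \<in> codes t M" using i0 L(1) by (auto simp: \<kappa>_def codes_def E_def Pos_def)
  moreover have "\<not> code_classifier N c \<kappa> (fst c i)" if "i < t" for i
  proof
    assume accepted: "code_classifier N c \<kappa> (fst c i)"
    hence "(i, False) \<in> E" using that by (simp add: classifier E_def)
    with separates accepted show False by (force simp: classifier pick_def)
  qed
  moreover have "q \<le> card {i. i < t \<and> i \<notin> code_positions \<kappa> \<and> code_classifier N c \<kappa> (snd c i)}"
  proof -
    have "Pos - code_positions \<kappa> \<subseteq> {i. i < t \<and> i \<notin> code_positions \<kappa> \<and> code_classifier N c \<kappa> (snd c i)}"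
    proof
      fix i assume i: "i \<in> Pos - code_positions \<kappa>"
      hence "(i, True) \<in> E" by (simp add: E_def)
      with separates pos_near[of i] i show "i \<in> {i. i < t \<and> i \<notin> code_positions \<kappa> \<and> code_classifier N c \<kappa> (snd c i)}"
        by (force simp: classifier pick_def Pos_def)
    qed
    hence "card (Pos - code_positions \<kappa>) \<le> card {i. i < t \<and> i \<notin> code_positions \<kappa> \<and> code_classifier N c \<kappa> (snd c i)}"
      by (rule card_mono[rotated]) simp
    moreover have "card Pos - card (code_positions \<kappa>) \<le> card (Pos - code_positions \<kappa>)"
      by (rule diff_card_le_card_Diff) (simp add: code_positions_def)
    moreover have "card (code_positions \<kappa>) \<le> M + 1"
      using card_code_positions[of \<kappa>] \<open>length L \<le> M\<close> by (simp add: \<kappa>_def)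
    ultimately show ?thesis using many unfolding Pos_def by linarith
  qed
  ultimately show ?thesis by (auto simp: separated_pairs_def)
qed

section \<open>Parameters\<close>

text \<open>The exponent \<open>q\<close> is chosen as \<open>(M + 2) * L\<close> with \<open>L = 8 (M + 2) D + 16\<close>, so that
  \<open>2 t < L^4 \<le> 2^L\<close> and hence \<open>2^q\<close> exceeds the number \<open>\<approx> (2 t)^(M + 1)\<close> of codes.\<close>
definition swap_exponent :: "nat \<Rightarrow> nat \<Rightarrow> nat" where
  "swap_exponent M D = (M + 2) * (8 * (M + 2) * D + 16)"

definition hit_count :: "nat \<Rightarrow> nat \<Rightarrow> nat" where
  "hit_count M D = swap_exponent M D + M + 1"

definition block_length :: "nat \<Rightarrow> nat \<Rightarrow> nat" where
  "block_length M D = 2 * hit_count M D * D"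

definition sample_length :: "nat \<Rightarrow> nat \<Rightarrow> nat" where
  "sample_length M D = hit_count M D * block_length M D"

lemma power4_le_two_power: "16 \<le> n \<Longrightarrow> n ^ 4 \<le> (2::nat) ^ n"
proof (induction n rule: dec_induct)
  case base
  show ?case by simp
next
  case (step n)
  have "1 \<le> n ^ 3" "n \<le> n ^ 3" "n\<^sup>2 \<le> n ^ 3" "16 * n ^ 3 \<le> n * n ^ 3"
    using step(1) power_increasing[of 1 3 n] power_increasing[of 2 3 n]
    by (auto simp: one_le_power intro: mult_le_mono1)
  moreover have "n ^ 4 = n * n ^ 3" "(Suc n) ^ 4 = n ^ 4 + 4 * n ^ 3 + 6 * n\<^sup>2 + 4 * n + 1"
    by (simp_all add: power_numeral_reduce algebra_simps)
  ultimately have "(Suc n) ^ 4 \<le> 2 * n ^ 4" by linarith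
  also have "\<dots> \<le> 2 * 2 ^ n" using step by simp
  finally show ?case by simp
qed

lemma hit_count_le: "hit_count M D \<le> 2 * (M + 2) * (8 * (M + 2) * D + 16)"
proof -
  have "(M + 2) * 1 \<le> (M + 2) * (8 * (M + 2) * D + 16)" by (intro mult_le_mono2) simp
  thus ?thesis by (simp add: hit_count_def swap_exponent_def)
qed

lemma two_sample_length_lt: "D \<ge> 1 \<Longrightarrow> 2 * sample_length M D < 2 ^ (8 * (M + 2) * D + 16)"
proof -
  assume "D \<ge> 1"
  define L where "L = 8 * (M + 2) * D + 16"
  define q0 where "q0 = hit_count M D"
  have "2 * sample_length M D = 4 * q0 * q0 * D"
    by (simp add: sample_length_def block_length_def q0_def)
  also have "\<dots> \<le> 4 * (2 * (M + 2) * L) * (2 * (M + 2) * L) * D"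
    using hit_count_le[of M D] by (intro mult_mono) (auto simp: q0_def L_def)
  also have "\<dots> = (16 * (M + 2) * (M + 2) * D) * (L * L)" by (simp add: algebra_simps)
  also have "\<dots> < (L * L) * (L * L)"
  proof (rule mult_strict_right_mono)
    have "16 * (M + 2) * (M + 2) * D \<le> 16 * (M + 2) * (M + 2) * D * D" using \<open>D \<ge> 1\<close> by simp
    also have "\<dots> < L * L" by (simp add: L_def algebra_simps)
    finally show "16 * (M + 2) * (M + 2) * D < L * L" .
  qed (simp add: L_def)
  also have "\<dots> = L ^ 4" by (simp add: power_numeral_reduce)
  also have "\<dots> \<le> 2 ^ L" by (rule power4_le_two_power) (simp add: L_def)
  finally show ?thesis by (simp add: L_def)
qed

lemma codes_bound_lt_two_power:
  assumes "D \<ge> 1"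
  shows "4 * sample_length M D * (M + 1) * (2 * sample_length M D) ^ M < 2 ^ swap_exponent M D"
proof -
  define t where "t = sample_length M D"
  have "M + 1 \<le> t"
  proof -
    have "M + 1 \<le> hit_count M D" "1 \<le> block_length M D"
      using assms by (simp_all add: hit_count_def block_length_def)
    thus ?thesis unfolding t_def sample_length_def by (metis le_trans mult_le_mono2 nat_mult_1_right)
  qed
  hence "4 * t * (M + 1) * (2 * t) ^ M \<le> (4 * t * t) * (2 * t) ^ M"
    by (intro mult_right_mono mult_le_mono2) auto
  also have "\<dots> = (2 * t) ^ (M + 2)" by (simp add: power_add power2_eq_square algebra_simps)
  also have "\<dots> < (2 ^ (8 * (M + 2) * D + 16)) ^ (M + 2)"
    using two_sample_length_lt[OF assms] by (intro power_strict_mono) (auto simp: t_def)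
  also have "\<dots> = 2 ^ swap_exponent M D"
    by (simp only: swap_exponent_def power_mult[symmetric] mult.commute)
  finally show ?thesis by (simp add: t_def)
qed

lemma sample_length_le: "D \<ge> 1 \<Longrightarrow> sample_length M D \<le> 4608 * (M + 2) ^ 4 * D ^ 3"
proof -
  assume "D \<ge> 1"
  have "8 * (M + 2) * D + 16 \<le> 24 * (M + 2) * D"
    using \<open>D \<ge> 1\<close> mult_le_mono[of 1 "M + 2" 1 D] by linarith
  hence "hit_count M D \<le> 2 * (M + 2) * (24 * (M + 2) * D)"
    using hit_count_le[of M D] mult_le_mono2 order_trans by blast
  also have "\<dots> = 48 * (M + 2)\<^sup>2 * D" by (simp add: power2_eq_square algebra_simps)
  finally have "hit_count M D \<le> 48 * (M + 2)\<^sup>2 * D" .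
  have "sample_length M D = 2 * (hit_count M D * hit_count M D) * D"
    by (simp add: sample_length_def block_length_def algebra_simps)
  also have "\<dots> \<le> 2 * ((48 * (M + 2)\<^sup>2 * D) * (48 * (M + 2)\<^sup>2 * D)) * D"
    using \<open>hit_count M D \<le> 48 * (M + 2)\<^sup>2 * D\<close> by (intro mult_le_mono1 mult_le_mono2 mult_le_mono)
  also have "\<dots> = 4608 * (M + 2) ^ 4 * D ^ 3"
    by (simp add: power_numeral_reduce power2_eq_square algebra_simps)
  finally show ?thesis .
qed

section \<open>Covering by a sample\<close>

definition bad_pairs ::
    "nat \<Rightarrow> real \<Rightarrow> (nat \<Rightarrow> real) set \<Rightarrow> nat \<Rightarrow> nat \<Rightarrow> ((nat \<Rightarrow> (nat \<Rightarrow> real)) \<times> (nat \<Rightarrow> (nat \<Rightarrow> real))) set" where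
  "bad_pairs N \<epsilon> V t k = {c \<in> PiE {..<t} (\<lambda>_. V) \<times> PiE {..<t} (\<lambda>_. V).
     \<exists>v. (\<forall>i<t. \<not> distN N (fst c i) v \<le> 1 + \<epsilon>) \<and> k \<le> card {i. i < t \<and> distN N v (snd c i) \<le> 1}}"

text \<open>If no sample covers \<open>V\<close>, pair each first sample with a point \<open>v\<close> it misses; by density, half
  of all second samples hit \<open>B(v, 1)\<close> often.\<close>
lemma card_bad_pairs_if_no_cover:
  assumes "finite V" "0 < \<delta>" "\<delta> \<le> 1" and long: "real b * \<delta> \<ge> 2 * real q0"
    and dense: "\<forall>v\<in>V. real (card {u\<in>V. distN N v u \<le> 1}) \<ge> \<delta> * real (card V)"
    and no_cover: "\<forall>xs\<in>PiE {..<q0 * b} (\<lambda>_. V). \<exists>v\<in>V. \<forall>i<q0 * b. \<not> distN N (xs i) v \<le> 1 + \<epsilon>"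
  shows "real (card (PiE {..<q0 * b} (\<lambda>_. V) \<times> PiE {..<q0 * b} (\<lambda>_. V)))
           \<le> 2 * real (card (bad_pairs N \<epsilon> V (q0 * b) q0))"
proof -
  define t where "t = q0 * b"
  define Xs where "Xs = PiE {..<t} (\<lambda>_. V)"
  define hits where "hits v = {ys \<in> Xs. q0 \<le> card {i. i < t \<and> ys i \<in> {u\<in>V. distN N v u \<le> 1}}}" for v
  obtain miss where miss: "miss xs \<in> V" "\<forall>i<t. \<not> distN N (xs i) (miss xs) \<le> 1 + \<epsilon>" if "xs \<in> Xs" for xs
    using no_cover unfolding Xs_def t_def by metis
  have fXs: "finite Xs" using \<open>finite V\<close> by (simp add: Xs_def finite_PiE)
  have half: "real (card Xs) \<le> 2 * real (card (hits v))" if "v \<in> V" for v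
    using card_tuples_hitting_often[of V "{u\<in>V. distN N v u \<le> 1}" \<delta> q0 b] assms that
    unfolding hits_def Xs_def t_def by (simp add: card_PiE)
  have "Sigma Xs (\<lambda>xs. hits (miss xs)) \<subseteq> bad_pairs N \<epsilon> V t q0"
  proof safe
    fix xs ys assume xs: "xs \<in> Xs" and ys: "ys \<in> hits (miss xs)"
    have "ys i \<in> V" if "i < t" for i using ys that by (auto simp: hits_def Xs_def)
    hence "{i. i < t \<and> ys i \<in> {u\<in>V. distN N (miss xs) u \<le> 1}} = {i. i < t \<and> distN N (miss xs) (ys i) \<le> 1}"
      by auto
    thus "(xs, ys) \<in> bad_pairs N \<epsilon> V t q0"
      using xs ys miss[OF xs] by (auto simp: bad_pairs_def hits_def Xs_def)
  qed
  hence "card (Sigma Xs (\<lambda>xs. hits (miss xs))) \<le> card (bad_pairs N \<epsilon> V t q0)"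
    by (rule card_mono[rotated]) (simp add: bad_pairs_def Xs_def[symmetric] fXs)
  moreover have "real (card Xs * card Xs) \<le> 2 * real (card (Sigma Xs (\<lambda>xs. hits (miss xs))))"
  proof -
    have "real (card Xs * card Xs) = (\<Sum>xs\<in>Xs. real (card Xs))" by simp
    also have "\<dots> \<le> (\<Sum>xs\<in>Xs. 2 * real (card (hits (miss xs))))"
      using half miss by (intro sum_mono) blast
    also have "\<dots> = 2 * real (card (Sigma Xs (\<lambda>xs. hits (miss xs))))"
      using fXs by (subst card_SigmaI) (auto simp: hits_def sum_distrib_left intro: finite_subset)
    finally show ?thesis .
  qed
  ultimately show ?thesis by (simp add: Xs_def t_def card_cartesian_product)
qed

lemma card_bad_pairs_le:
  assumes "0 < \<epsilon>" "\<epsilon> \<le> 1" "M = nat \<lfloor>1001 / \<epsilon>\<^sup>2\<rfloor>" "finite V"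
  shows "card (bad_pairs N \<epsilon> V t (q + M + 1)) * 2 ^ q
           \<le> card (codes t M) * card (PiE {..<t} (\<lambda>_. V) \<times> PiE {..<t} (\<lambda>_. V))"
proof -
  define C where "C = PiE {..<t} (\<lambda>_. V) \<times> PiE {..<t} (\<lambda>_. V)"
  define P where "P \<kappa> = C \<inter> separated_pairs (\<lambda>c. code_classifier N c \<kappa>) (code_positions \<kappa>) t q" for \<kappa>
  have fC: "finite C" using \<open>finite V\<close> by (simp add: C_def finite_PiE)
  have "bad_pairs N \<epsilon> V t (q + M + 1) \<subseteq> (\<Union>\<kappa>\<in>codes t M. P \<kappa>)"
  proof
    fix c assume "c \<in> bad_pairs N \<epsilon> V t (q + M + 1)"
    then obtain v where "c \<in> C" "\<forall>i<t. \<not> distN N (fst c i) v \<le> 1 + \<epsilon>"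
      "q + M + 1 \<le> card {i. i < t \<and> distN N v (snd c i) \<le> 1}"
      by (auto simp: bad_pairs_def C_def)
    moreover from this(2,3) obtain \<kappa> where "\<kappa> \<in> codes t M"
      "c \<in> separated_pairs (\<lambda>c. code_classifier N c \<kappa>) (code_positions \<kappa>) t q"
      using separating_code_exists[OF assms(1-3)] by blast
    ultimately show "c \<in> (\<Union>\<kappa>\<in>codes t M. P \<kappa>)" by (auto simp: P_def)
  qed
  hence "card (bad_pairs N \<epsilon> V t (q + M + 1)) \<le> card (\<Union>\<kappa>\<in>codes t M. P \<kappa>)"
    by (rule card_mono[rotated]) (intro finite_UN_I finite_codes, simp add: P_def fC)
  also have "\<dots> \<le> (\<Sum>\<kappa>\<in>codes t M. card (P \<kappa>))" by (rule card_UN_le[OF finite_codes])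
  finally have "card (bad_pairs N \<epsilon> V t (q + M + 1)) * 2 ^ q \<le> (\<Sum>\<kappa>\<in>codes t M. card (P \<kappa>) * 2 ^ q)"
    unfolding sum_distrib_right[symmetric] by (rule mult_le_mono1)
  also have "\<dots> \<le> (\<Sum>\<kappa>\<in>codes t M. card C)"
    unfolding P_def
    by (intro sum_mono card_separated_pairs_le[OF code_classifier_swap_on C_def \<open>finite V\<close>])
  finally show ?thesis by (simp add: C_def)
qed

lemma sample_covers:
  assumes "finite V" "V \<noteq> {}" "0 < \<delta>" "\<delta> \<le> 1" "0 < \<epsilon>" "\<epsilon> \<le> 1"
    and dense: "\<forall>v\<in>V. real (card {u\<in>V. distN N v u \<le> 1}) \<ge> \<delta> * real (card V)"
    and M: "M = nat \<lfloor>1001 / \<epsilon>\<^sup>2\<rfloor>" and D: "real D * \<delta> \<ge> 1"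
  shows "\<exists>xs\<in>PiE {..<sample_length M D} (\<lambda>_. V). \<forall>v\<in>V. \<exists>i<sample_length M D. distN N (xs i) v \<le> 1 + \<epsilon>"
proof (rule ccontr)
  define q where "q = swap_exponent M D"
  define q0 where "q0 = hit_count M D"
  define t where "t = sample_length M D"
  define C where "C = PiE {..<t} (\<lambda>_. V) \<times> PiE {..<t} (\<lambda>_. V)"
  assume "\<not> ?thesis"
  hence no_cover: "\<forall>xs\<in>PiE {..<q0 * block_length M D} (\<lambda>_. V). \<exists>v\<in>V. \<forall>i<q0 * block_length M D.
      \<not> distN N (xs i) v \<le> 1 + \<epsilon>"
    by (auto simp: q0_def sample_length_def)
  have "D \<ge> 1" using D \<open>0 < \<delta>\<close> by (cases "D = 0") auto
  have "2 * real q0 = 2 * real q0 * 1" by simp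
  also have "\<dots> \<le> 2 * real q0 * (real D * \<delta>)" using D by (intro mult_left_mono) auto
  also have "\<dots> = real (block_length M D) * \<delta>" by (simp add: block_length_def q0_def)
  finally have long: "real (block_length M D) * \<delta> \<ge> 2 * real q0" .
  have "real (card C) * 2 ^ q \<le> 2 * real (card (bad_pairs N \<epsilon> V t (q + M + 1))) * 2 ^ q"
    using card_bad_pairs_if_no_cover[OF \<open>finite V\<close> \<open>0 < \<delta>\<close> \<open>\<delta> \<le> 1\<close> long dense no_cover]
    by (simp add: C_def t_def sample_length_def q0_def hit_count_def q_def)
  also have "\<dots> \<le> 2 * real (card (codes t M) * card C)"
  proof -
    have "real (card (bad_pairs N \<epsilon> V t (q + M + 1)) * 2 ^ q) \<le> real (card (codes t M) * card C)"
      using card_bad_pairs_le[OF \<open>0 < \<epsilon>\<close> \<open>\<epsilon> \<le> 1\<close> M \<open>finite V\<close>, of N t q]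
      unfolding C_def of_nat_le_iff .
    thus ?thesis by simp
  qed
  finally have "real (card C) * 2 ^ q \<le> real (card C) * (2 * real (card (codes t M)))"
    by (simp add: mult_ac)
  moreover have "card C > 0"
    using \<open>finite V\<close> \<open>V \<noteq> {}\<close> by (simp add: C_def card_cartesian_product card_PiE card_gt_0_iff)
  ultimately have "(2::real) ^ q \<le> 2 * real (card (codes t M))" by simp
  hence "(2::nat) ^ q \<le> 2 * card (codes t M)"
    by (metis of_nat_le_iff of_nat_mult of_nat_numeral of_nat_power)
  also have "\<dots> \<le> 2 * (2 * t * ((M + 1) * (2 * t) ^ M))" using card_codes[of t M] by simp
  also have "\<dots> = 4 * t * (M + 1) * (2 * t) ^ M" by (simp only: mult.assoc)
  also have "\<dots> < 2 ^ q" unfolding t_def q_def by (rule codes_bound_lt_two_power[OF \<open>D \<ge> 1\<close>])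
  finally show False by simp
qed

lemma sample_length_le_poly:
  fixes \<delta> \<epsilon> :: real
  assumes "0 < \<delta>" "0 < \<epsilon>"
  shows "real (sample_length (nat \<lfloor>1001 / (min \<epsilon> 1)\<^sup>2\<rfloor>) (nat \<lceil>1/\<delta>\<rceil>))
           \<le> (4608 * 1003 ^ 4) * (1/\<delta> + 1) ^ 3 * (1/\<epsilon> + 1) ^ 8"
proof -
  define M where "M = nat \<lfloor>1001 / (min \<epsilon> 1)\<^sup>2\<rfloor>"
  define D where "D = nat \<lceil>1/\<delta>\<rceil>"
  have "0 < \<lceil>1/\<delta>\<rceil>" using assms by simp
  hence "D \<ge> 1" unfolding D_def by linarith
  have "real M \<le> 1001 / (min \<epsilon> 1)\<^sup>2" using assms by (simp add: M_def)
  also have "\<dots> = 1001 * (1 / min \<epsilon> 1)\<^sup>2" by (simp add: power_divide)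
  also have "\<dots> \<le> 1001 * (1/\<epsilon> + 1)\<^sup>2"
    using assms by (intro mult_left_mono power_mono) (auto simp: min_def field_simps)
  moreover have "1 \<le> (1/\<epsilon> + 1)\<^sup>2" using assms by (intro one_le_power) simp
  ultimately have "real (M + 2) \<le> 1003 * (1/\<epsilon> + 1)\<^sup>2" by simp
  moreover have "real D \<le> 1/\<delta> + 1"
    using assms of_int_ceiling_le_add_one[of "1/\<delta>"] by (simp add: D_def)
  ultimately have "4608 * real (M + 2) ^ 4 * real D ^ 3 \<le> 4608 * (1003 * (1/\<epsilon> + 1)\<^sup>2) ^ 4 * (1/\<delta> + 1) ^ 3"
    by (intro mult_mono power_mono) auto
  also have "\<dots> = (4608 * 1003 ^ 4) * (1/\<delta> + 1) ^ 3 * (1/\<epsilon> + 1) ^ 8"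
    by (simp add: power_mult_distrib power_mult[symmetric] mult_ac)
  finally have "4608 * real (M + 2) ^ 4 * real D ^ 3 \<le> (4608 * 1003 ^ 4) * (1/\<delta> + 1) ^ 3 * (1/\<epsilon> + 1) ^ 8" .
  moreover have "real (sample_length M D) \<le> real (4608 * (M + 2) ^ 4 * D ^ 3)"
    using sample_length_le[OF \<open>D \<ge> 1\<close>] by (simp only: of_nat_le_iff)
  moreover have "real (4608 * (M + 2) ^ 4 * D ^ 3) = 4608 * real (M + 2) ^ 4 * real D ^ 3"
    by (simp only: of_nat_mult of_nat_power of_nat_numeral)
  ultimately have "real (sample_length M D) \<le> (4608 * 1003 ^ 4) * (1/\<delta> + 1) ^ 3 * (1/\<epsilon> + 1) ^ 8"
    by linarith
  thus ?thesis by (simp only: M_def D_def)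
qed

lemma cballN_Int: "V \<subseteq> RN N \<Longrightarrow> cballN N v r \<inter> V = {u\<in>V. distN N v u \<le> r}"
  by (auto simp: cballN_def)

theorem lemma1p1:
  shows "\<exists>p. is_poly2 p \<and>
    (\<forall>(N::nat) (\<delta>::real) (\<epsilon>::real) (V::(nat \<Rightarrow> real) set).
       N \<ge> 1 \<and> 0 < \<delta> \<and> \<delta> \<le> 1 \<and> 0 < \<epsilon> \<and>
       finite V \<and> V \<noteq> {} \<and> V \<subseteq> RN N \<and>
       (\<forall>v\<in>V. real (card (cballN N v 1 \<inter> V)) \<ge> \<delta> * real (card V))
       \<longrightarrow> (\<exists>X\<subseteq>V. real (card X) \<le> p (1/\<delta>) (1/\<epsilon>) \<and>
                  V \<subseteq> (\<Union>x\<in>X. cballN N x (1 + \<epsilon>))))"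
proof (intro exI[of _ "\<lambda>a b. (4608 * 1003 ^ 4) * (a + 1) ^ 3 * (b + 1) ^ 8"] conjI allI impI)
  show "is_poly2 (\<lambda>a b. (4608 * 1003 ^ 4) * (a + 1) ^ 3 * (b + 1) ^ 8)"
    by (rule is_poly2_shifted_powers)
  fix N :: nat and \<delta> \<epsilon> :: real and V :: "(nat \<Rightarrow> real) set"
  assume H: "N \<ge> 1 \<and> 0 < \<delta> \<and> \<delta> \<le> 1 \<and> 0 < \<epsilon> \<and> finite V \<and> V \<noteq> {} \<and> V \<subseteq> RN N \<and>
       (\<forall>v\<in>V. real (card (cballN N v 1 \<inter> V)) \<ge> \<delta> * real (card V))"
  define M where "M = nat \<lfloor>1001 / (min \<epsilon> 1)\<^sup>2\<rfloor>"
  define D where "D = nat \<lceil>1/\<delta>\<rceil>"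
  define t where "t = sample_length M D"
  have "real D \<ge> 1/\<delta>" unfolding D_def by linarith
  hence "real D * \<delta> \<ge> 1" using H by (simp add: field_simps)
  with H obtain xs where xs: "xs \<in> PiE {..<t} (\<lambda>_. V)" "\<forall>v\<in>V. \<exists>i<t. distN N (xs i) v \<le> 1 + min \<epsilon> 1"
    using sample_covers[of V \<delta> "min \<epsilon> 1" N M D] by (auto simp: cballN_Int M_def t_def)
  show "\<exists>X\<subseteq>V. real (card X) \<le> (4608 * 1003 ^ 4) * (1/\<delta> + 1) ^ 3 * (1/\<epsilon> + 1) ^ 8 \<and>
      V \<subseteq> (\<Union>x\<in>X. cballN N x (1 + \<epsilon>))"
  proof (intro exI[of _ "xs ` {..<t}"] conjI)
    show "xs ` {..<t} \<subseteq> V" using xs(1) by auto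
    show "V \<subseteq> (\<Union>x\<in>xs ` {..<t}. cballN N x (1 + \<epsilon>))"
      using xs(2) H by (fastforce simp: cballN_def)
    have "real (card (xs ` {..<t})) \<le> real t" using card_image_le[of "{..<t}" xs] by simp
    also have "\<dots> \<le> (4608 * 1003 ^ 4) * (1/\<delta> + 1) ^ 3 * (1/\<epsilon> + 1) ^ 8"
      using sample_length_le_poly H by (simp add: t_def M_def D_def)
    finally show "real (card (xs ` {..<t})) \<le> (4608 * 1003 ^ 4) * (1/\<delta> + 1) ^ 3 * (1/\<epsilon> + 1) ^ 8" .
  qed
qed

end
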